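(* Let $d,m,r$ be positive integers, $\sigma,\tau_s,\tau_g>0$, and let $\phi,\psi:\mathbb{R}\to\mathbb{R}$ be measurable functions with $\mathbb{E}\phi(G)^2<\infty$ and $\mathbb{E}\psi(G)^2<\infty$ for Gaussian $G$. Let $W_i\in\mathbb{R}^{m\times d}$, $W_g,W_u\in\mathbb{R}^{r\times d}$, $W_o\in\mathbb{R}^{d\times m}$, $\widetilde W_o\in\mathbb{R}^{d\times r}$ be independent random matrices with i.i.d. entries, those of $W_i,W_g,W_u$ distributed $\mathcal{N}(0,\sigma^2)$, those of $W_o$ distributed $\mathcal{N}(0,\tau_s^2)$ and those of $\widetilde W_o$ distributed $\mathcal{N}(0,\tau_g^2)$. Define $$F_{\mathrm{single}}(x)=W_o\phi(W_ix),\qquad F_{\mathrm{gate}}(x)=\widetilde W_o\big[\psi(W_gx)\odot W_ux\big],$$ with $\phi,\psi$ applied entrywise and $\odot$ the entrywise product. Fix $x\in\mathbb{R}^d$, let $\nu=\sigma^2\|x\|_2^2$, let $G_\nu\sim\mathcal{N}(0,\nu)$, and let $P_{\mathrm{out}}\in\mathbb{R}^{d\times d}$ be an orthogonal projector. Then $$\mathbb{E}\|P_{\mathrm{out}}F_{\mathrm{single}}(x)\|_2^2=\operatorname{rank}(P_{\mathrm{out}})\,\tau_s^2\,m\,\mathbb{E}\phi(G_\nu)^2,$$ $$\mathbb{E}\|P_{\mathrm{out}}F_{\mathrm{gate}}(x)\|_2^2=\operatorname{rank}(P_{\mathrm{out}})\,\tau_g^2\,r\,\nu\,\mathbb{E}\psi(G_\nu)^2,$$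 and hence, whenever $\operatorname{rank}(P_{\mathrm{out}})\ge1$ and $\mathbb{E}\phi(G_\nu)^2>0$, $$\frac{\mathbb{E}\|P_{\mathrm{out}}F_{\mathrm{gate}}(x)\|_2^2}{\mathbb{E}\|P_{\mathrm{out}}F_{\mathrm{single}}(x)\|_2^2}=\rho_0:=\frac{\tau_g^2}{\tau_s^2}\,\frac{r}{m}\,\frac{\nu\,\mathbb{E}\psi(G_\nu)^2}{\mathbb{E}\phi(G_\nu)^2}.$$
   Context: $F_{\mathrm{single}}$ models a single-branch feed-forward network (e.g. GELU) of hidden width $m$ and $F_{\mathrm{gate}}$ a multiplicative gated feed-forward network (e.g. SwiGLU/GEGLU) of gated width $r$, both at random Gaussian initialization; expectations are over the random weights. An orthogonal projector satisfies $P=P^\top=P^2$. *)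

theory Defs
  imports "HOL-Probability.Probability"
begin

text \<open>Index type for all scalar weight entries of the two networks:
  entries of W_i (m x d), W_g (r x d), W_u (r x d), W_o (d x m), and the gated
  output matrix W_o tilde (d x r).\<close>
datatype ('m, 'd, 'r) wentry =
    Ein 'm 'd | Eg 'r 'd | Eu 'r 'd | Eo 'd 'm | Eot 'd 'r

text \<open>Centered Gaussian with variance v (point mass at 0 when v = 0).\<close>
definition gauss_meas :: "real \<Rightarrow> real measure" where
  "gauss_meas v = (if v > 0 then density lborel (normal_density 0 (sqrt v)) else return lborel 0)"

definition Wi :: "(('m::finite,'d::finite,'r::finite) wentry \<Rightarrow> 'a \<Rightarrow> real) \<Rightarrow> 'a \<Rightarrow> real^'d^'m" where
  "Wi X \<omega> = (\<chi> i j. X (Ein i j) \<omega>)"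
definition Wg :: "(('m::finite,'d::finite,'r::finite) wentry \<Rightarrow> 'a \<Rightarrow> real) \<Rightarrow> 'a \<Rightarrow> real^'d^'r" where
  "Wg X \<omega> = (\<chi> i j. X (Eg i j) \<omega>)"
definition Wu :: "(('m::finite,'d::finite,'r::finite) wentry \<Rightarrow> 'a \<Rightarrow> real) \<Rightarrow> 'a \<Rightarrow> real^'d^'r" where
  "Wu X \<omega> = (\<chi> i j. X (Eu i j) \<omega>)"
definition Wo :: "(('m::finite,'d::finite,'r::finite) wentry \<Rightarrow> 'a \<Rightarrow> real) \<Rightarrow> 'a \<Rightarrow> real^'m^'d" where
  "Wo X \<omega> = (\<chi> i j. X (Eo i j) \<omega>)"
definition Wot :: "(('m::finite,'d::finite,'r::finite) wentry \<Rightarrow> 'a \<Rightarrow> real) \<Rightarrow> 'a \<Rightarrow> real^'r^'d" where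
  "Wot X \<omega> = (\<chi> i j. X (Eot i j) \<omega>)"

definition F_single ::
  "(real \<Rightarrow> real) \<Rightarrow> (('m::finite,'d::finite,'r::finite) wentry \<Rightarrow> 'a \<Rightarrow> real) \<Rightarrow> 'a \<Rightarrow> real^'d \<Rightarrow> real^'d" where
  "F_single \<phi> X \<omega> x = Wo X \<omega> *v (\<chi> k. \<phi> ((Wi X \<omega> *v x) $ k))"

definition F_gate ::
  "(real \<Rightarrow> real) \<Rightarrow> (('m::finite,'d::finite,'r::finite) wentry \<Rightarrow> 'a \<Rightarrow> real) \<Rightarrow> 'a \<Rightarrow> real^'d \<Rightarrow> real^'d" where
  "F_gate \<psi> X \<omega> x = Wot X \<omega> *v (\<chi> k. \<psi> ((Wg X \<omega> *v x) $ k) * (Wu X \<omega> *v x) $ k)"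

end

theory Submission
  imports Defs
begin

(*
  Both networks have the form W h, where the output matrix W has i.i.d. N(0, tau^2) entries and
  the activation vector h depends only on the hidden-layer weights, hence is independent of W.
  So E[W_ja W_j'a' h_a h_a'] vanishes unless (j, a) = (j', a'), and
  E |P W h|^2 = |P|_F^2 tau^2 sum_a E[h_a^2], where |P|_F^2 = tr (P^T P) = tr P = rank P for an
  orthogonal projector.  Each pre-activation (W x)_a is a linear combination of independent
  centred Gaussians, hence distributed as G_nu.  This gives E[h_a^2] = E phi(G_nu)^2 for the
  single branch, and E[psi(g)^2 u^2] = E psi(G_nu)^2 * nu for the gated branch, whose gate and
  up rows are independent.
*)

lemma orthogonal_projector_expansion:
  fixes P :: "real^'n^'n"
  assumes sym: "transpose P = P" and idem: "P ** P = P"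
    and orth: "pairwise orthogonal B" and unit: "\<And>b. b \<in> B \<Longrightarrow> norm b = 1"
    and fin: "finite B" and span_B: "span B = range ((*v) P)"
  shows "P *v v = (\<Sum>b\<in>B. inner b v *\<^sub>R b)"
proof -
  have fixed: "P *v b = b" if "b \<in> B" for b
  proof -
    have "b \<in> range ((*v) P)"
      using span_base[OF that] by (simp add: span_B)
    then obtain z where "b = P *v z" by blast
    then show ?thesis by (simp add: matrix_vector_mul_assoc idem)
  qed
  have self_adjoint: "inner (P *v z) w = inner z (P *v w)" for z w
    by (metis dot_lmul_matrix sym vector_transpose_matrix)
  have inner_B: "inner b b' = (if b = b' then 1 else 0)" if "b \<in> B" "b' \<in> B" for b b'
    using orth unit that by (auto simp: pairwise_def orthogonal_def power2_norm_eq_inner[symmetric])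
  define w where "w = P *v v - (\<Sum>b\<in>B. inner b v *\<^sub>R b)"
  have "P *v v \<in> span B" by (simp add: span_B)
  moreover have "(\<Sum>b\<in>B. inner b v *\<^sub>R b) \<in> span B"
    by (intro span_sum span_scale span_base)
  ultimately have w_span: "w \<in> span B" unfolding w_def by (rule span_diff)
  have "orthogonal w b" if "b \<in> B" for b
  proof -
    have "inner b (P *v v) = inner b v"
      using self_adjoint[of b v] fixed[OF that] by simp
    moreover have "inner b (\<Sum>b'\<in>B. inner b' v *\<^sub>R b') = inner b v"
      using that fin by (simp add: inner_sum_right inner_B if_distrib cong: if_cong)
    ultimately show ?thesis unfolding w_def orthogonal_def
      by (simp add: inner_diff_right inner_commute)
  qed
  then have "orthogonal w w" by (rule orthogonal_to_span[OF w_span])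
  then show ?thesis by (simp add: orthogonal_def w_def)
qed

lemma sum_sq_entries_orthogonal_projector:
  fixes P :: "real^'n^'n"
  assumes sym: "transpose P = P" and idem: "P ** P = P"
  shows "(\<Sum>k\<in>UNIV. \<Sum>j\<in>UNIV. (P$k$j)\<^sup>2) = real (rank P)"
proof -
  have "subspace (range ((*v) P))"
    by (intro linear_subspace_image matrix_vector_mul_linear subspace_UNIV)
  then obtain B where orth: "pairwise orthogonal B" and unit: "\<And>b. b \<in> B \<Longrightarrow> norm b = 1"
    and indep: "independent B" and card_B: "card B = dim (range ((*v) P))"
    and span_B: "span B = range ((*v) P)"
    using orthonormal_basis_subspace by metis
  have fin: "finite B" using indep independent_imp_finite by blast
  have diag: "P$j$j = (\<Sum>b\<in>B. (b$j)\<^sup>2)" for j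
  proof -
    have "P$j$j = (P *v axis j 1)$j"
      by (simp add: matrix_vector_mult_def axis_def if_distrib cong: if_cong)
    also have "\<dots> = (\<Sum>b\<in>B. inner b (axis j 1) * b$j)"
      by (simp add: orthogonal_projector_expansion[OF sym idem orth unit fin span_B])
    also have "\<dots> = (\<Sum>b\<in>B. (b$j)\<^sup>2)"
      by (simp add: cart_eq_inner_axis[symmetric] power2_eq_square)
    finally show ?thesis .
  qed
  have "(\<Sum>k\<in>UNIV. \<Sum>j\<in>UNIV. (P$k$j)\<^sup>2) = (\<Sum>j\<in>UNIV. (transpose P ** P)$j$j)"
    by (subst sum.swap) (simp add: matrix_matrix_mult_def transpose_def power2_eq_square)
  also have "\<dots> = (\<Sum>j\<in>UNIV. \<Sum>b\<in>B. (b$j)\<^sup>2)"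
    by (simp add: sym idem diag)
  also have "\<dots> = (\<Sum>b\<in>B. inner b b)"
    by (subst sum.swap) (simp add: inner_vec_def power2_eq_square)
  also have "\<dots> = (\<Sum>b\<in>B. 1)"
    by (intro sum.cong refl) (metis unit power2_norm_eq_inner power_one)
  also have "\<dots> = real (rank P)"
    using card_B by (simp add: rank_dim_range)
  finally show ?thesis .
qed

lemma normal_density_second_moment:
  assumes "\<sigma> > 0"
  shows "integrable lborel (\<lambda>t. normal_density 0 \<sigma> t * t\<^sup>2)"
    and "(\<integral>t. normal_density 0 \<sigma> t * t\<^sup>2 \<partial>lborel) = \<sigma>\<^sup>2"
  using integrable_normal_moment[of \<sigma> 0 2] integral_normal_moment_even[of \<sigma> 0 1] assms
  by (simp_all add: fact_numeral)

lemma gauss_meas_second_moment: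
  assumes "v \<ge> 0"
  shows "integrable (gauss_meas v) (\<lambda>t. t\<^sup>2)" and "(\<integral>t. t\<^sup>2 \<partial>gauss_meas v) = v"
proof -
  have "integrable (gauss_meas v) (\<lambda>t. t\<^sup>2) \<and> (\<integral>t. t\<^sup>2 \<partial>gauss_meas v) = v"
  proof (cases "v > 0")
    case True
    then show ?thesis
      using normal_density_second_moment[of "sqrt v"]
      by (simp add: gauss_meas_def integrable_density integral_density)
  next
    case False
    with assms have "v = 0" by simp
    interpret prob_space "return lborel (0::real)"
      by (rule prob_space_return) simp
    have "integrable (return lborel (0::real)) (\<lambda>t. t\<^sup>2)"
      by (rule integrable_const_bound[where B=0]) (auto simp: AE_return)
    then show ?thesis using \<open>v = 0\<close> by (simp add: gauss_meas_def integral_return)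
  qed
  then show "integrable (gauss_meas v) (\<lambda>t. t\<^sup>2)" "(\<integral>t. t\<^sup>2 \<partial>gauss_meas v) = v"
    by simp_all
qed

lemma (in prob_space) centered_normal_moments:
  assumes D: "distributed M lborel Z (normal_density 0 s)" and s: "s > 0"
  shows "integrable M Z" and "expectation Z = 0"
    and "integrable M (\<lambda>\<omega>. (Z \<omega>)\<^sup>2)" and "expectation (\<lambda>\<omega>. (Z \<omega>)\<^sup>2) = s\<^sup>2"
  using distributed_integrable[OF D, of "\<lambda>t. t"] distributed_integrable[OF D, of "\<lambda>t. t\<^sup>2"]
    distributed_integral[OF D, of "\<lambda>t. t\<^sup>2"] normal_distributed_expectation[OF s D]
    integrable_normal_moment_nz_1[OF s, of 0] normal_density_second_moment[OF s]
  by simp_all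

lemma integrable_mult_if_square_integrable:
  fixes f g :: "'a \<Rightarrow> real"
  assumes "integrable M (\<lambda>x. (f x)\<^sup>2)" "integrable M (\<lambda>x. (g x)\<^sup>2)"
    and [measurable]: "f \<in> borel_measurable M" "g \<in> borel_measurable M"
  shows "integrable M (\<lambda>x. f x * g x)"
proof (rule Bochner_Integration.integrable_bound)
  show "integrable M (\<lambda>x. (f x)\<^sup>2 + (g x)\<^sup>2)" using assms by simp
  have "\<bar>f x * g x\<bar> \<le> (f x)\<^sup>2 + (g x)\<^sup>2" for x
  proof -
    have "2 * (\<bar>f x\<bar> * \<bar>g x\<bar>) \<le> (f x)\<^sup>2 + (g x)\<^sup>2"
      using sum_squares_bound[of "\<bar>f x\<bar>" "\<bar>g x\<bar>"] by (simp add: mult.assoc)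
    moreover have "0 \<le> \<bar>f x\<bar> * \<bar>g x\<bar>" by simp
    ultimately show ?thesis unfolding abs_mult by linarith
  qed
  then show "AE x in M. norm (f x * g x) \<le> norm ((f x)\<^sup>2 + (g x)\<^sup>2)" by simp
qed simp

lemma (in prob_space) indep_vars_reindex_inj:
  assumes ind: "indep_vars (\<lambda>_. borel) X UNIV" and inj: "inj f"
  shows "indep_vars (\<lambda>_. borel) (\<lambda>j. X (f j)) UNIV"
proof -
  have "indep_vars (\<lambda>j. PiM {f j} (\<lambda>_. borel)) (\<lambda>j \<omega>. restrict (\<lambda>i. X i \<omega>) {f j}) UNIV"
    by (rule indep_vars_restrict[OF ind]) (auto simp: disjoint_family_on_def inj_eq[OF inj])
  then have "indep_vars (\<lambda>_. borel) (\<lambda>j \<omega>. (\<lambda>g. g (f j)) (restrict (\<lambda>i. X i \<omega>) {f j})) UNIV"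
    by (rule indep_vars_compose2) (auto intro: measurable_component_singleton)
  then show ?thesis by simp
qed

lemma (in prob_space) indep_var_restrict_compose:
  assumes "indep_vars (\<lambda>_. borel) X UNIV" and "A \<inter> B = {}"
    and "f \<in> borel_measurable (PiM A (\<lambda>_. borel))" and "g \<in> borel_measurable (PiM B (\<lambda>_. borel))"
  shows "indep_var borel (\<lambda>\<omega>. f (restrict (\<lambda>i. X i \<omega>) A)) borel (\<lambda>\<omega>. g (restrict (\<lambda>i. X i \<omega>) B))"
  using indep_var_compose[OF indep_var_restrict[OF assms(1,2)] assms(3,4)] by (simp add: comp_def)

lemma (in prob_space) distr_gaussian_row:
  fixes X :: "'i \<Rightarrow> 'a \<Rightarrow> real" and R :: "'d::finite \<Rightarrow> 'i" and x :: "real^'d"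
  assumes ind: "indep_vars (\<lambda>_. borel) X UNIV" and inj: "inj R" and \<sigma>: "\<sigma> > 0"
    and dist: "\<And>l. distributed M lborel (X (R l)) (normal_density 0 \<sigma>)"
  shows "distr M lborel (\<lambda>\<omega>. \<Sum>l\<in>UNIV. X (R l) \<omega> * x$l) = gauss_meas (\<sigma>\<^sup>2 * (norm x)\<^sup>2)"
proof (cases "x = 0")
  case True
  then show ?thesis by (simp add: gauss_meas_def)
next
  case False
  define L where "L = {l. x$l \<noteq> 0}"
  have "L \<noteq> {}" using False by (auto simp: L_def vec_eq_iff)
  moreover have "indep_vars (\<lambda>_. borel) (\<lambda>l \<omega>. x$l * X (R l) \<omega>) L"
    using indep_vars_compose2[OF indep_vars_reindex_inj[OF ind inj], of "\<lambda>l t. x$l * t" "\<lambda>_. borel"]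
    by (auto intro: indep_vars_subset)
  moreover have "distributed M lborel (\<lambda>\<omega>. x$l * X (R l) \<omega>) (normal_density 0 (\<bar>x$l\<bar> * \<sigma>))"
    if "l \<in> L" for l
    using normal_density_affine[OF dist \<sigma>, of "x$l" 0 l] that by (simp add: L_def)
  ultimately have "distributed M lborel (\<lambda>\<omega>. \<Sum>l\<in>L. x$l * X (R l) \<omega>)
      (normal_density (\<Sum>l\<in>L. 0) (sqrt (\<Sum>l\<in>L. (\<bar>x$l\<bar> * \<sigma>)\<^sup>2)))"
    by (intro sum_indep_normal) (auto simp: L_def \<sigma>)
  moreover have "(\<lambda>\<omega>. \<Sum>l\<in>L. x$l * X (R l) \<omega>) = (\<lambda>\<omega>. \<Sum>l\<in>UNIV. X (R l) \<omega> * x$l)"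
    by (intro ext sum.mono_neutral_cong_left) (auto simp: L_def mult.commute)
  moreover have "(\<Sum>l\<in>L. (\<bar>x$l\<bar> * \<sigma>)\<^sup>2) = \<sigma>\<^sup>2 * (norm x)\<^sup>2"
  proof -
    have "(\<Sum>l\<in>L. (\<bar>x$l\<bar> * \<sigma>)\<^sup>2) = (\<Sum>l\<in>UNIV. (\<bar>x$l\<bar> * \<sigma>)\<^sup>2)"
      by (intro sum.mono_neutral_left) (auto simp: L_def)
    also have "\<dots> = \<sigma>\<^sup>2 * (\<Sum>l\<in>UNIV. x$l * x$l)"
      by (simp add: sum_distrib_left power_mult_distrib power2_eq_square mult_ac)
    finally show ?thesis by (simp add: power2_norm_eq_inner inner_vec_def)
  qed
  moreover have "\<sigma>\<^sup>2 * (norm x)\<^sup>2 > 0" using \<sigma> False by simp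
  ultimately show ?thesis
    by (simp add: distributed_def gauss_meas_def)
qed

lemma (in prob_space) integral_gaussian_row:
  fixes X :: "'i \<Rightarrow> 'a \<Rightarrow> real" and R :: "'d::finite \<Rightarrow> 'i" and x :: "real^'d"
    and f :: "real \<Rightarrow> real"
  assumes ind: "indep_vars (\<lambda>_. borel) X UNIV" and inj: "inj R" and \<sigma>: "\<sigma> > 0"
    and dist: "\<And>l. distributed M lborel (X (R l)) (normal_density 0 \<sigma>)"
    and f: "f \<in> borel_measurable borel" and int: "integrable (gauss_meas (\<sigma>\<^sup>2 * (norm x)\<^sup>2)) f"
  shows "integrable M (\<lambda>\<omega>. f (\<Sum>l\<in>UNIV. X (R l) \<omega> * x$l))"
    and "(\<integral>\<omega>. f (\<Sum>l\<in>UNIV. X (R l) \<omega> * x$l) \<partial>M) = (\<integral>t. f t \<partial>gauss_meas (\<sigma>\<^sup>2 * (norm x)\<^sup>2))"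
proof -
  have [measurable]: "X i \<in> borel_measurable M" for i
    using ind by (auto simp: indep_vars_def)
  note row = distr_gaussian_row[OF ind inj \<sigma> dist, of x, symmetric]
  show "integrable M (\<lambda>\<omega>. f (\<Sum>l\<in>UNIV. X (R l) \<omega> * x$l))"
    using int integrable_distr_eq[of _ M lborel f] f unfolding row by simp
  show "(\<integral>\<omega>. f (\<Sum>l\<in>UNIV. X (R l) \<omega> * x$l) \<partial>M) = (\<integral>t. f t \<partial>gauss_meas (\<sigma>\<^sup>2 * (norm x)\<^sup>2))"
    using integral_distr[of _ M lborel f] f unfolding row by simp
qed

lemma (in prob_space) integral_indep_normal_product:
  fixes X :: "'i \<Rightarrow> 'a \<Rightarrow> real"
  assumes ind: "indep_vars (\<lambda>_. borel) X UNIV" and s: "s > 0"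
    and dist: "distributed M lborel (X i) (normal_density 0 s)"
      "distributed M lborel (X i') (normal_density 0 s)"
  shows "integrable M (\<lambda>\<omega>. X i \<omega> * X i' \<omega>)"
    and "(\<integral>\<omega>. X i \<omega> * X i' \<omega> \<partial>M) = (if i = i' then s\<^sup>2 else 0)"
proof -
  have "integrable M (\<lambda>\<omega>. X i \<omega> * X i' \<omega>) \<and>
      (\<integral>\<omega>. X i \<omega> * X i' \<omega> \<partial>M) = (if i = i' then s\<^sup>2 else 0)"
  proof (cases "i = i'")
    case True
    then show ?thesis
      using centered_normal_moments[OF dist(1) s] by (simp add: power2_eq_square)
  next
    case False
    have "indep_var borel (\<lambda>\<omega>. (\<lambda>r. r i) (restrict (\<lambda>i. X i \<omega>) {i}))
        borel (\<lambda>\<omega>. (\<lambda>r. r i') (restrict (\<lambda>i. X i \<omega>) {i'}))"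
      by (rule indep_var_restrict_compose[OF ind])
        (auto simp: False intro: measurable_component_singleton)
    then have "indep_var borel (X i) borel (X i')" by simp
    then show ?thesis
      using False centered_normal_moments[OF dist(1) s] centered_normal_moments[OF dist(2) s]
        indep_var_lebesgue_integral indep_var_integrable
      by auto
  qed
  then show "integrable M (\<lambda>\<omega>. X i \<omega> * X i' \<omega>)"
    and "(\<integral>\<omega>. X i \<omega> * X i' \<omega> \<partial>M) = (if i = i' then s\<^sup>2 else 0)"
    by simp_all
qed

lemma (in prob_space) integral_weights_activations_product:
  fixes X :: "'i \<Rightarrow> 'a \<Rightarrow> real" and H H' :: "('i \<Rightarrow> real) \<Rightarrow> real"
  assumes ind: "indep_vars (\<lambda>_. borel) X UNIV" and s: "s > 0"
    and dist: "distributed M lborel (X i) (normal_density 0 s)"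
      "distributed M lborel (X i') (normal_density 0 s)"
    and notin: "i \<notin> B" "i' \<notin> B"
    and H: "H \<in> borel_measurable (PiM B (\<lambda>_. borel))" "H' \<in> borel_measurable (PiM B (\<lambda>_. borel))"
    and h: "\<And>\<omega>. h \<omega> = H (restrict (\<lambda>i. X i \<omega>) B)" "\<And>\<omega>. h' \<omega> = H' (restrict (\<lambda>i. X i \<omega>) B)"
    and sq_int: "integrable M (\<lambda>\<omega>. (h \<omega>)\<^sup>2)" "integrable M (\<lambda>\<omega>. (h' \<omega>)\<^sup>2)"
  shows "integrable M (\<lambda>\<omega>. X i \<omega> * X i' \<omega> * (h \<omega> * h' \<omega>))"
    and "(\<integral>\<omega>. X i \<omega> * X i' \<omega> * (h \<omega> * h' \<omega>) \<partial>M) =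
      (if i = i' then s\<^sup>2 * (\<integral>\<omega>. h \<omega> * h' \<omega> \<partial>M) else 0)"
proof -
  have "(\<lambda>\<omega>. restrict (\<lambda>i. X i \<omega>) B) \<in> measurable M (PiM B (\<lambda>_. borel))"
    using ind by (intro measurable_restrict) (auto simp: indep_vars_def)
  then have h_meas: "h \<in> borel_measurable M" "h' \<in> borel_measurable M"
    unfolding h[abs_def] using H by simp_all
  have "indep_var borel (\<lambda>\<omega>. (\<lambda>r. r i * r i') (restrict (\<lambda>i. X i \<omega>) {i, i'}))
      borel (\<lambda>\<omega>. (\<lambda>r. H r * H' r) (restrict (\<lambda>i. X i \<omega>) B))"
  proof (rule indep_var_restrict_compose[OF ind])
    show "{i, i'} \<inter> B = {}" using notin by simp
    have "(\<lambda>r. r k :: real) \<in> borel_measurable (PiM {i, i'} (\<lambda>_. borel))" if "k \<in> {i, i'}" for k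
      using that by (rule measurable_component_singleton)
    then show "(\<lambda>r. r i * r i' :: real) \<in> borel_measurable (PiM {i, i'} (\<lambda>_. borel))"
      by (intro borel_measurable_times) simp_all
    show "(\<lambda>r. H r * H' r) \<in> borel_measurable (PiM B (\<lambda>_. borel))"
      using H by (rule borel_measurable_times)
  qed
  then have indep: "indep_var borel (\<lambda>\<omega>. X i \<omega> * X i' \<omega>) borel (\<lambda>\<omega>. h \<omega> * h' \<omega>)"
    by (simp add: h)
  note weights = integral_indep_normal_product[OF ind s dist]
  have act: "integrable M (\<lambda>\<omega>. h \<omega> * h' \<omega>)"
    by (rule integrable_mult_if_square_integrable[OF sq_int h_meas])
  show "integrable M (\<lambda>\<omega>. X i \<omega> * X i' \<omega> * (h \<omega> * h' \<omega>))"
    by (rule indep_var_integrable[OF indep weights(1) act])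
  show "(\<integral>\<omega>. X i \<omega> * X i' \<omega> * (h \<omega> * h' \<omega>) \<partial>M) =
      (if i = i' then s\<^sup>2 * (\<integral>\<omega>. h \<omega> * h' \<omega> \<partial>M) else 0)"
    using indep_var_lebesgue_integral[OF indep weights(1) act] weights(2) by simp
qed

lemma sq_norm_proj_matrix_vector_expand:
  fixes P :: "real^'d^'d" and Y :: "'d \<Rightarrow> 'k::finite \<Rightarrow> real" and h :: "'k \<Rightarrow> real"
  shows "(norm (P *v ((\<chi> j a. Y j a) *v (\<chi> a. h a))))\<^sup>2 =
    (\<Sum>k\<in>UNIV. \<Sum>j\<in>UNIV. \<Sum>a'\<in>UNIV. \<Sum>j'\<in>UNIV. \<Sum>a\<in>UNIV.
        P$k$j * P$k$j' * (Y j a * Y j' a' * (h a * h a')))"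
proof -
  have "(norm (P *v ((\<chi> j a. Y j a) *v (\<chi> a. h a))))\<^sup>2 =
     (\<Sum>k\<in>UNIV. (\<Sum>j\<in>UNIV. P$k$j * (\<Sum>a\<in>UNIV. Y j a * h a)) *
        (\<Sum>j\<in>UNIV. P$k$j * (\<Sum>a\<in>UNIV. Y j a * h a)))"
    by (simp add: power2_norm_eq_inner inner_vec_def matrix_vector_mult_def)
  also have "\<dots> = (\<Sum>k\<in>UNIV. \<Sum>j\<in>UNIV. \<Sum>j'\<in>UNIV. \<Sum>a'\<in>UNIV. \<Sum>a\<in>UNIV.
        P$k$j * P$k$j' * (Y j a * Y j' a' * (h a * h a')))"
    by (simp add: sum_product sum_distrib_left sum_distrib_right mult_ac)
  also have "\<dots> = (\<Sum>k\<in>UNIV. \<Sum>j\<in>UNIV. \<Sum>a'\<in>UNIV. \<Sum>j'\<in>UNIV. \<Sum>a\<in>UNIV.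
        P$k$j * P$k$j' * (Y j a * Y j' a' * (h a * h a')))"
    by (intro sum.cong refl sum.swap)
  finally show ?thesis .
qed

lemma integral_sq_norm_proj_matrix_vector:
  fixes Y :: "'d::finite \<Rightarrow> 'k::finite \<Rightarrow> 'a \<Rightarrow> real" and h :: "'k \<Rightarrow> 'a \<Rightarrow> real"
    and P :: "real^'d^'d" and e :: "'k \<Rightarrow> real"
  assumes int: "\<And>j a j' a'. integrable M (\<lambda>\<omega>. Y j a \<omega> * Y j' a' \<omega> * (h a \<omega> * h a' \<omega>))"
    and moment: "\<And>j a j' a'. (\<integral>\<omega>. Y j a \<omega> * Y j' a' \<omega> * (h a \<omega> * h a' \<omega>) \<partial>M) =
      (if a' = a then if j' = j then c * e a else 0 else 0)"
  shows "(\<integral>\<omega>. (norm (P *v ((\<chi> j a. Y j a \<omega>) *v (\<chi> a. h a \<omega>))))\<^sup>2 \<partial>M) =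
    (\<Sum>k\<in>UNIV. \<Sum>j\<in>UNIV. (P$k$j)\<^sup>2) * c * (\<Sum>a\<in>UNIV. e a)"
proof -
  have "(\<integral>\<omega>. (norm (P *v ((\<chi> j a. Y j a \<omega>) *v (\<chi> a. h a \<omega>))))\<^sup>2 \<partial>M) =
      (\<Sum>k\<in>UNIV. \<Sum>j\<in>UNIV. \<Sum>a'\<in>UNIV. \<Sum>j'\<in>UNIV. \<Sum>a\<in>UNIV.
        P$k$j * P$k$j' * (\<integral>\<omega>. Y j a \<omega> * Y j' a' \<omega> * (h a \<omega> * h a' \<omega>) \<partial>M))"
    by (simp add: sq_norm_proj_matrix_vector_expand int integral_sum)
  also have "\<dots> = (\<Sum>k\<in>UNIV. \<Sum>j\<in>UNIV. \<Sum>a\<in>UNIV. (P$k$j)\<^sup>2 * (c * e a))"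
    by (simp add: moment if_distrib[of "times _"] power2_eq_square cong: if_cong)
  also have "\<dots> = (\<Sum>k\<in>UNIV. \<Sum>j\<in>UNIV. (P$k$j)\<^sup>2) * c * (\<Sum>a\<in>UNIV. e a)"
    by (simp add: sum_distrib_left sum_distrib_right mult_ac)
  finally show ?thesis .
qed

text \<open>The activations see the weights only through their restriction to \<open>B\<close>, which contains
  no output weight: this is how their independence from the output layer is expressed.\<close>

lemma (in prob_space) integral_sq_norm_proj_gaussian_layer:
  fixes X :: "'i \<Rightarrow> 'a \<Rightarrow> real" and C :: "'d::finite \<Rightarrow> 'k::finite \<Rightarrow> 'i"
    and H :: "'k \<Rightarrow> ('i \<Rightarrow> real) \<Rightarrow> real" and P :: "real^'d^'d"
  assumes ind: "indep_vars (\<lambda>_. borel) X UNIV" and s: "s > 0"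
    and inj: "inj (\<lambda>(j, a). C j a)"
    and dist: "\<And>j a. distributed M lborel (X (C j a)) (normal_density 0 s)"
    and notin: "\<And>j a. C j a \<notin> B"
    and H: "\<And>a. H a \<in> borel_measurable (PiM B (\<lambda>_. borel))"
    and sq_int: "\<And>a. integrable M (\<lambda>\<omega>. (H a (restrict (\<lambda>i. X i \<omega>) B))\<^sup>2)"
    and sq_eq: "\<And>a. (\<integral>\<omega>. (H a (restrict (\<lambda>i. X i \<omega>) B))\<^sup>2 \<partial>M) = e"
    and sym: "transpose P = P" and idem: "P ** P = P"
  shows "(\<integral>\<omega>. (norm (P *v ((\<chi> j a. X (C j a) \<omega>) *v (\<chi> a. H a (restrict (\<lambda>i. X i \<omega>) B)))))\<^sup>2 \<partial>M)
    = real (rank P) * s\<^sup>2 * real CARD('k) * e"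
proof -
  have C_eq_iff: "C j a = C j' a' \<longleftrightarrow> j = j' \<and> a = a'" for j a j' a'
    using inj by (auto simp: inj_def)
  have "integrable M (\<lambda>\<omega>. X (C j a) \<omega> * X (C j' a') \<omega> *
        (H a (restrict (\<lambda>i. X i \<omega>) B) * H a' (restrict (\<lambda>i. X i \<omega>) B))) \<and>
      (\<integral>\<omega>. X (C j a) \<omega> * X (C j' a') \<omega> *
        (H a (restrict (\<lambda>i. X i \<omega>) B) * H a' (restrict (\<lambda>i. X i \<omega>) B)) \<partial>M) =
      (if a' = a then if j' = j then s\<^sup>2 * e else 0 else 0)" for j a j' a'
    using integral_weights_activations_product[OF ind s dist[of j a] dist[of j' a'] notin[of j a]
        notin[of j' a'] H[of a] H[of a'] refl refl sq_int[of a] sq_int[of a']] sq_eq[of a]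
    by (simp add: C_eq_iff power2_eq_square)
  then show ?thesis
    by (simp add: integral_sq_norm_proj_matrix_vector
        sum_sq_entries_orthogonal_projector[OF sym idem])
qed

lemma (in prob_space) integral_sq_gated_activation:
  fixes X :: "'i \<Rightarrow> 'a \<Rightarrow> real" and R R' :: "'d::finite \<Rightarrow> 'i" and x :: "real^'d"
    and \<sigma> :: real and \<psi> :: "real \<Rightarrow> real"
  defines "\<nu> \<equiv> \<sigma>\<^sup>2 * (norm x)\<^sup>2"
  assumes ind: "indep_vars (\<lambda>_. borel) X UNIV" and \<sigma>: "\<sigma> > 0"
    and inj: "inj R" "inj R'" and disj: "range R \<inter> range R' = {}"
    and dist: "\<And>l. distributed M lborel (X (R l)) (normal_density 0 \<sigma>)"
      "\<And>l. distributed M lborel (X (R' l)) (normal_density 0 \<sigma>)"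
    and \<psi>: "\<psi> \<in> borel_measurable borel" and \<psi>_sq: "integrable (gauss_meas \<nu>) (\<lambda>t. (\<psi> t)\<^sup>2)"
  shows "integrable M (\<lambda>\<omega>. (\<psi> (\<Sum>l\<in>UNIV. X (R l) \<omega> * x$l) * (\<Sum>l\<in>UNIV. X (R' l) \<omega> * x$l))\<^sup>2)"
    and "(\<integral>\<omega>. (\<psi> (\<Sum>l\<in>UNIV. X (R l) \<omega> * x$l) * (\<Sum>l\<in>UNIV. X (R' l) \<omega> * x$l))\<^sup>2 \<partial>M)
      = \<nu> * (\<integral>t. (\<psi> t)\<^sup>2 \<partial>gauss_meas \<nu>)"
proof -
  define gate where "gate r = (\<psi> (\<Sum>l\<in>UNIV. r (R l) * x$l))\<^sup>2" for r :: "'i \<Rightarrow> real"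
  define up where "up r = (\<Sum>l\<in>UNIV. r (R' l) * x$l)\<^sup>2" for r :: "'i \<Rightarrow> real"
  have "indep_var borel (\<lambda>\<omega>. gate (restrict (\<lambda>i. X i \<omega>) (range R)))
      borel (\<lambda>\<omega>. up (restrict (\<lambda>i. X i \<omega>) (range R')))"
    unfolding gate_def up_def using disj
    by (intro indep_var_restrict_compose[OF ind] borel_measurable_power measurable_compose[OF _ \<psi>]
        borel_measurable_sum borel_measurable_times measurable_component_singleton rangeI
        borel_measurable_const)
  then have indep: "indep_var borel (\<lambda>\<omega>. (\<psi> (\<Sum>l\<in>UNIV. X (R l) \<omega> * x$l))\<^sup>2)
      borel (\<lambda>\<omega>. (\<Sum>l\<in>UNIV. X (R' l) \<omega> * x$l)\<^sup>2)"
    by (simp add: gate_def up_def)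
  note gate_row = integral_gaussian_row[OF ind inj(1) \<sigma> dist(1), where f = "\<lambda>t. (\<psi> t)\<^sup>2" and x = x]
  note up_row = integral_gaussian_row[OF ind inj(2) \<sigma> dist(2), where f = "\<lambda>t. t\<^sup>2" and x = x]
  have moments:
    "integrable M (\<lambda>\<omega>. (\<psi> (\<Sum>l\<in>UNIV. X (R l) \<omega> * x$l))\<^sup>2)"
    "(\<integral>\<omega>. (\<psi> (\<Sum>l\<in>UNIV. X (R l) \<omega> * x$l))\<^sup>2 \<partial>M) = (\<integral>t. (\<psi> t)\<^sup>2 \<partial>gauss_meas \<nu>)"
    "integrable M (\<lambda>\<omega>. (\<Sum>l\<in>UNIV. X (R' l) \<omega> * x$l)\<^sup>2)"
    "(\<integral>\<omega>. (\<Sum>l\<in>UNIV. X (R' l) \<omega> * x$l)\<^sup>2 \<partial>M) = \<nu>"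
    using gate_row up_row \<psi> \<psi>_sq gauss_meas_second_moment[of \<nu>] by (simp_all add: \<nu>_def)
  show "integrable M (\<lambda>\<omega>. (\<psi> (\<Sum>l\<in>UNIV. X (R l) \<omega> * x$l) * (\<Sum>l\<in>UNIV. X (R' l) \<omega> * x$l))\<^sup>2)"
    using indep_var_integrable[OF indep moments(1,3)] by (simp add: power_mult_distrib)
  show "(\<integral>\<omega>. (\<psi> (\<Sum>l\<in>UNIV. X (R l) \<omega> * x$l) * (\<Sum>l\<in>UNIV. X (R' l) \<omega> * x$l))\<^sup>2 \<partial>M)
      = \<nu> * (\<integral>t. (\<psi> t)\<^sup>2 \<partial>gauss_meas \<nu>)"
    using indep_var_lebesgue_integral[OF indep moments(1,3)] moments(2,4)
    by (simp add: power_mult_distrib)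
qed

lemma (in prob_space) integral_sq_norm_proj_F_single:
  fixes X :: "('m::finite, 'd::finite, 'r::finite) wentry \<Rightarrow> 'a \<Rightarrow> real"
    and x :: "real^'d" and P :: "real^'d^'d" and \<sigma> \<tau> :: real and \<phi> :: "real \<Rightarrow> real"
  defines "\<nu> \<equiv> \<sigma>\<^sup>2 * (norm x)\<^sup>2"
  assumes ind: "indep_vars (\<lambda>_. borel) X UNIV" and \<sigma>: "\<sigma> > 0" and \<tau>: "\<tau> > 0"
    and dist_in: "\<And>a l. distributed M lborel (X (Ein a l)) (normal_density 0 \<sigma>)"
    and dist_out: "\<And>j a. distributed M lborel (X (Eo j a)) (normal_density 0 \<tau>)"
    and \<phi>: "\<phi> \<in> borel_measurable borel" and \<phi>_sq: "integrable (gauss_meas \<nu>) (\<lambda>t. (\<phi> t)\<^sup>2)"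
    and sym: "transpose P = P" and idem: "P ** P = P"
  shows "(\<integral>\<omega>. (norm (P *v F_single \<phi> X \<omega> x))\<^sup>2 \<partial>M)
    = real (rank P) * \<tau>\<^sup>2 * real CARD('m) * (\<integral>t. (\<phi> t)\<^sup>2 \<partial>gauss_meas \<nu>)"
proof -
  define B where "B = range (\<lambda>(a, l). Ein a l :: ('m, 'd, 'r) wentry)"
  define H where "H a r = \<phi> (\<Sum>l\<in>UNIV. r (Ein a l) * x$l)" for a and r :: "('m, 'd, 'r) wentry \<Rightarrow> real"
  have Ein_B: "Ein a l \<in> B" for a l by (auto simp: B_def)
  have F: "F_single \<phi> X \<omega> x = (\<chi> j a. X (Eo j a) \<omega>) *v (\<chi> a. H a (restrict (\<lambda>i. X i \<omega>) B))" for \<omega>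
    by (simp add: F_single_def Wo_def Wi_def H_def Ein_B matrix_vector_mult_def)
  have H_meas: "H a \<in> borel_measurable (PiM B (\<lambda>_. borel))" for a
    unfolding H_def
    by (intro measurable_compose[OF _ \<phi>] borel_measurable_sum borel_measurable_times
        measurable_component_singleton Ein_B borel_measurable_const)
  have "integrable M (\<lambda>\<omega>. (H a (restrict (\<lambda>i. X i \<omega>) B))\<^sup>2) \<and>
      (\<integral>\<omega>. (H a (restrict (\<lambda>i. X i \<omega>) B))\<^sup>2 \<partial>M) = (\<integral>t. (\<phi> t)\<^sup>2 \<partial>gauss_meas \<nu>)" for a
    using integral_gaussian_row[OF ind _ \<sigma> dist_in[of a], where f = "\<lambda>t. (\<phi> t)\<^sup>2" and x = x] \<phi> \<phi>_sq
    by (simp add: H_def Ein_B \<nu>_def inj_def)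
  then show ?thesis
    unfolding F
    by (intro integral_sq_norm_proj_gaussian_layer[OF ind \<tau> _ dist_out _ H_meas _ _ sym idem])
      (auto simp: inj_def B_def)
qed

lemma (in prob_space) integral_sq_norm_proj_F_gate:
  fixes X :: "('m::finite, 'd::finite, 'r::finite) wentry \<Rightarrow> 'a \<Rightarrow> real"
    and x :: "real^'d" and P :: "real^'d^'d" and \<sigma> \<tau> :: real and \<psi> :: "real \<Rightarrow> real"
  defines "\<nu> \<equiv> \<sigma>\<^sup>2 * (norm x)\<^sup>2"
  assumes ind: "indep_vars (\<lambda>_. borel) X UNIV" and \<sigma>: "\<sigma> > 0" and \<tau>: "\<tau> > 0"
    and dist_gate: "\<And>a l. distributed M lborel (X (Eg a l)) (normal_density 0 \<sigma>)"
    and dist_up: "\<And>a l. distributed M lborel (X (Eu a l)) (normal_density 0 \<sigma>)"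
    and dist_out: "\<And>j a. distributed M lborel (X (Eot j a)) (normal_density 0 \<tau>)"
    and \<psi>: "\<psi> \<in> borel_measurable borel" and \<psi>_sq: "integrable (gauss_meas \<nu>) (\<lambda>t. (\<psi> t)\<^sup>2)"
    and sym: "transpose P = P" and idem: "P ** P = P"
  shows "(\<integral>\<omega>. (norm (P *v F_gate \<psi> X \<omega> x))\<^sup>2 \<partial>M)
    = real (rank P) * \<tau>\<^sup>2 * real CARD('r) * \<nu> * (\<integral>t. (\<psi> t)\<^sup>2 \<partial>gauss_meas \<nu>)"
proof -
  define B where "B = range (\<lambda>(a, l). Eg a l :: ('m, 'd, 'r) wentry) \<union> range (\<lambda>(a, l). Eu a l)"
  define H where "H a r = \<psi> (\<Sum>l\<in>UNIV. r (Eg a l) * x$l) * (\<Sum>l\<in>UNIV. r (Eu a l) * x$l)"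
    for a and r :: "('m, 'd, 'r) wentry \<Rightarrow> real"
  have in_B: "Eg a l \<in> B" "Eu a l \<in> B" for a l by (auto simp: B_def)
  have F: "F_gate \<psi> X \<omega> x = (\<chi> j a. X (Eot j a) \<omega>) *v (\<chi> a. H a (restrict (\<lambda>i. X i \<omega>) B))" for \<omega>
    by (simp add: F_gate_def Wot_def Wg_def Wu_def H_def in_B matrix_vector_mult_def)
  have H_meas: "H a \<in> borel_measurable (PiM B (\<lambda>_. borel))" for a
    unfolding H_def
    by (intro measurable_compose[OF _ \<psi>] borel_measurable_sum borel_measurable_times
        measurable_component_singleton in_B borel_measurable_const)
  have "integrable M (\<lambda>\<omega>. (H a (restrict (\<lambda>i. X i \<omega>) B))\<^sup>2) \<and>
      (\<integral>\<omega>. (H a (restrict (\<lambda>i. X i \<omega>) B))\<^sup>2 \<partial>M) = \<nu> * (\<integral>t. (\<psi> t)\<^sup>2 \<partial>gauss_meas \<nu>)" for a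
  proof -
    have "inj (Eg a :: 'd \<Rightarrow> ('m, 'd, 'r) wentry)" "inj (Eu a :: 'd \<Rightarrow> ('m, 'd, 'r) wentry)"
      "range (Eg a) \<inter> range (Eu a :: 'd \<Rightarrow> ('m, 'd, 'r) wentry) = {}"
      by (auto simp: inj_def)
    from integral_sq_gated_activation[OF ind \<sigma> this dist_gate[of a] dist_up[of a] \<psi> \<psi>_sq[unfolded \<nu>_def]]
    show ?thesis by (simp add: H_def in_B \<nu>_def)
  qed
  then show ?thesis
    unfolding F mult.assoc[of "real (rank P) * \<tau>\<^sup>2 * real CARD('r)" \<nu>]
    by (intro integral_sq_norm_proj_gaussian_layer[OF ind \<tau> _ dist_out _ H_meas _ _ sym idem])
      (auto simp: inj_def B_def)
qed

theorem theorem2: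
  fixes M :: "'a measure"
    and X :: "('m::finite, 'd::finite, 'r::finite) wentry \<Rightarrow> 'a \<Rightarrow> real"
    and \<sigma> \<tau>s \<tau>g :: real
    and \<phi> \<psi> :: "real \<Rightarrow> real"
    and x :: "real^'d"
    and P :: "real^'d^'d"
  assumes "prob_space M"
    and "\<sigma> > 0" and "\<tau>s > 0" and "\<tau>g > 0"
    and "\<phi> \<in> borel_measurable borel" and "\<psi> \<in> borel_measurable borel"
    and "\<forall>v\<ge>0. integrable (gauss_meas v) (\<lambda>t. (\<phi> t)\<^sup>2)"
    and "\<forall>v\<ge>0. integrable (gauss_meas v) (\<lambda>t. (\<psi> t)\<^sup>2)"
    and "prob_space.indep_vars M (\<lambda>_. borel) X UNIV"
    and "\<And>i j. distributed M lborel (X (Ein i j)) (normal_density 0 \<sigma>)"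
    and "\<And>i j. distributed M lborel (X (Eg i j)) (normal_density 0 \<sigma>)"
    and "\<And>i j. distributed M lborel (X (Eu i j)) (normal_density 0 \<sigma>)"
    and "\<And>i j. distributed M lborel (X (Eo i j)) (normal_density 0 \<tau>s)"
    and "\<And>i j. distributed M lborel (X (Eot i j)) (normal_density 0 \<tau>g)"
    and "transpose P = P" and "P ** P = P"
  shows
    "let \<nu> = \<sigma>\<^sup>2 * (norm x)\<^sup>2;
         E\<phi> = (\<integral>t. (\<phi> t)\<^sup>2 \<partial>gauss_meas \<nu>);
         E\<psi> = (\<integral>t. (\<psi> t)\<^sup>2 \<partial>gauss_meas \<nu>);
         E_single = (\<integral>\<omega>. (norm (P *v F_single \<phi> X \<omega> x))\<^sup>2 \<partial>M);
         E_gate = (\<integral>\<omega>. (norm (P *v F_gate \<psi> X \<omega> x))\<^sup>2 \<partial>M)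
     in E_single = real (rank P) * \<tau>s\<^sup>2 * real CARD('m) * E\<phi>
      \<and> E_gate = real (rank P) * \<tau>g\<^sup>2 * real CARD('r) * \<nu> * E\<psi>
      \<and> (rank P \<ge> 1 \<and> E\<phi> > 0 \<longrightarrow>
           E_gate / E_single = (\<tau>g\<^sup>2 / \<tau>s\<^sup>2) * (real CARD('r) / real CARD('m)) * (\<nu> * E\<psi> / E\<phi>))"
proof -
  interpret prob_space M by (rule assms(1))
  have ind: "indep_vars (\<lambda>_. borel) X UNIV" using assms(9) by simp
  define \<nu> where "\<nu> = \<sigma>\<^sup>2 * (norm x)\<^sup>2"
  define E\<phi> where "E\<phi> = (\<integral>t. (\<phi> t)\<^sup>2 \<partial>gauss_meas \<nu>)"
  define E\<psi> where "E\<psi> = (\<integral>t. (\<psi> t)\<^sup>2 \<partial>gauss_meas \<nu>)"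
  have single: "(\<integral>\<omega>. (norm (P *v F_single \<phi> X \<omega> x))\<^sup>2 \<partial>M)
      = real (rank P) * \<tau>s\<^sup>2 * real CARD('m) * E\<phi>"
    unfolding E\<phi>_def \<nu>_def
    by (rule integral_sq_norm_proj_F_single[OF ind assms(2,3,10,13,5) _ assms(15,16)])
      (use assms(7) in auto)
  have gate: "(\<integral>\<omega>. (norm (P *v F_gate \<psi> X \<omega> x))\<^sup>2 \<partial>M)
      = real (rank P) * \<tau>g\<^sup>2 * real CARD('r) * \<nu> * E\<psi>"
    unfolding E\<psi>_def \<nu>_def
    by (rule integral_sq_norm_proj_F_gate[OF ind assms(2,4,11,12,14,6) _ assms(15,16)])
      (use assms(8) in auto)
  have ratio: "(real (rank P) * \<tau>g\<^sup>2 * real CARD('r) * \<nu> * E\<psi>) /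
        (real (rank P) * \<tau>s\<^sup>2 * real CARD('m) * E\<phi>)
      = (\<tau>g\<^sup>2 / \<tau>s\<^sup>2) * (real CARD('r) / real CARD('m)) * (\<nu> * E\<psi> / E\<phi>)"
    if "rank P \<ge> 1 \<and> E\<phi> > 0"
    using that assms(3) by (simp add: field_simps)
  show ?thesis
    unfolding Let_def \<nu>_def[symmetric] E\<phi>_def[symmetric] E\<psi>_def[symmetric] single gate
    using ratio by simp
qed

end
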